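(* Let $f : \widehat{\mathbb{Z}} \to \widehat{\mathbb{Z}}$ be a congruence stable map. Then $f$ is profinite preperiodic.
   Context: $\mathbb{N} = \{1,2,\dots\}$, $\widehat{\mathbb{Z}} = \varprojlim_n \mathbb{Z}/n\mathbb{Z}$ (a complete metric space with its profinite topology); $s \equiv_n t$ means $s-t \in n\widehat{\mathbb{Z}}$; $\widehat{\cdot}:\mathbb{N}\to\widehat{\mathbb{Z}}$ is the natural embedding. For a continuous map $f:\widehat{\mathbb{Z}}\to\widehat{\mathbb{Z}}$, a map $P:\mathbb{N}\to\mathbb{N}$ is a period map of $f$ if $s \equiv_{P(n)} t$ implies $f(s) \equiv_n f(t)$ for all $s,t \in \widehat{\mathbb{Z}}$, $n \in \mathbb{N}$. A continuous $f$ is congruence stable if there exists a period map $P$ of $f$ such that for each $n \in \mathbb{N}$, $P^k(n) = P^{k+1}(n)$ for all sufficiently large $k$. A continuous map $f$ is profinite preperiodic if for every $x \in \widehat{\mathbb{Z}}$ the following holds: for every $s \in \widehat{\mathbb{Z}}$ and every sequence of positive integers $(n_i)$ with $n_i \to +\infty$ in $\mathbb{R}$ and $\widehat{n_i} \to s$ in $\widehat{\mathbb{Z}}$, the limit $\lim_{i\to\infty} f^{n_i}(x)$ exists in $\widehat{\mathbb{Z}}$ and depends only on $s$. (Equivalently, each map $n \mapsto f^n(x)$ extends continuously to the profinite completion $\widehat{\mathbb{N}} = \mathbb{N} \sqcup \widehat{\mathbb{Z}}$ of $(\mathbb{N},+)$.) *)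

theory Defs
  imports "HOL-Analysis.Analysis"
begin

text \<open>An element of the profinite completion of the integers is represented by its
compatible family of residues: x n is the residue (in 0..n-1) of x modulo n, for every
positive n; the entry at 0 is normalised to 0.\<close>

typedef zhat = "{x :: nat \<Rightarrow> int. x 0 = 0 \<and> (\<forall>n>0. 0 \<le> x n \<and> x n < int n) \<and>
                 (\<forall>m n. 0 < m \<longrightarrow> n dvd m \<longrightarrow> x m mod int n = x n)}"
  by (rule exI[of _ "\<lambda>_. 0"]) auto

text \<open>The congruence s \<equiv>_n t, i.e. s - t \<in> n Zhat, i.e. s and t have the same image
in Zhat / n Zhat = Z / n Z.\<close>
definition zcong :: "nat \<Rightarrow> zhat \<Rightarrow> zhat \<Rightarrow> bool" where
  "zcong n s t \<longleftrightarrow> Rep_zhat s n = Rep_zhat t n"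

definition zhat_of_nat :: "nat \<Rightarrow> zhat" where
  "zhat_of_nat k = Abs_zhat (\<lambda>n. if n = 0 then 0 else int k mod int n)"

lemma zcong_mult_left:
  assumes "0 < a" "0 < b" "zcong (a * b) s t"
  shows "zcong a s t"
proof -
  have P: "\<And>m n. 0 < m \<Longrightarrow> n dvd m \<Longrightarrow> Rep_zhat u m mod int n = Rep_zhat u n" for u
    using Rep_zhat[of u] by auto
  have "Rep_zhat s a = Rep_zhat s (a*b) mod int a" using P[of "a*b" a s] assms by simp
  also have "\<dots> = Rep_zhat t (a*b) mod int a" using assms unfolding zcong_def by simp
  also have "\<dots> = Rep_zhat t a" using P[of "a*b" a t] assms by simp
  finally show ?thesis unfolding zcong_def .
qed

instantiation zhat :: topological_space
begin

definition open_zhat :: "zhat set \<Rightarrow> bool" where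
  "open_zhat U \<longleftrightarrow> (\<forall>x\<in>U. \<exists>m>0. \<forall>y. zcong m x y \<longrightarrow> y \<in> U)"

instance
proof
  show "open (UNIV :: zhat set)" unfolding open_zhat_def
    by (intro ballI exI[of _ "1::nat"]) simp
next
  fix S T :: "zhat set"
  assume S: "open S" and T: "open T"
  show "open (S \<inter> T)" unfolding open_zhat_def
  proof
    fix x assume "x \<in> S \<inter> T"
    then obtain a b where a: "a > 0" "\<forall>y. zcong a x y \<longrightarrow> y \<in> S"
      and b: "b > 0" "\<forall>y. zcong b x y \<longrightarrow> y \<in> T"
      using S T unfolding open_zhat_def by blast
    have "\<forall>y. zcong (a*b) x y \<longrightarrow> y \<in> S \<inter> T"
    proof (intro allI impI)
      fix y assume c: "zcong (a*b) x y"
      have "zcong a x y" using zcong_mult_left[OF a(1) b(1) c] .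
      moreover have "zcong b x y"
        using zcong_mult_left[OF b(1) a(1), of x y] c by (simp add: mult.commute)
      ultimately show "y \<in> S \<inter> T" using a(2) b(2) by blast
    qed
    moreover have "a * b > 0" using a(1) b(1) by simp
    ultimately show "\<exists>m>0. \<forall>y. zcong m x y \<longrightarrow> y \<in> S \<inter> T" by blast
  qed
next
  fix K :: "zhat set set"
  assume "\<forall>S\<in>K. open S"
  then show "open (\<Union>K)" unfolding open_zhat_def
    by (meson UnionE UnionI)
qed

end

definition is_period_map :: "(zhat \<Rightarrow> zhat) \<Rightarrow> (nat \<Rightarrow> nat) \<Rightarrow> bool" where
  "is_period_map f P \<longleftrightarrow>
     (\<forall>n>0. P n > 0 \<and> (\<forall>s t. zcong (P n) s t \<longrightarrow> zcong n (f s) (f t)))"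

definition congruence_stable :: "(zhat \<Rightarrow> zhat) \<Rightarrow> bool" where
  "congruence_stable f \<longleftrightarrow> continuous_on UNIV f \<and>
     (\<exists>P. is_period_map f P \<and> (\<forall>n>0. \<exists>K. \<forall>k\<ge>K. (P ^^ k) n = (P ^^ Suc k) n))"

definition profinite_preperiodic :: "(zhat \<Rightarrow> zhat) \<Rightarrow> bool" where
  "profinite_preperiodic f \<longleftrightarrow>
     (\<forall>x s. \<exists>L. \<forall>ns :: nat \<Rightarrow> nat.
        (\<forall>i. 0 < ns i) \<longrightarrow>
        filterlim (\<lambda>i. real (ns i)) at_top sequentially \<longrightarrow>
        (\<lambda>i. zhat_of_nat (ns i)) \<longlonglongrightarrow> s \<longrightarrow>
        (\<lambda>i. (f ^^ ns i) x) \<longlonglongrightarrow> L)"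

end

theory Submission
  imports Defs
begin

text \<open>Let \<open>P\<close> be a stable period map and \<open>n > 0\<close>. The iterates \<open>P\<^sup>k(n)\<close> reach a fixed
point \<open>N = P\<^sup>K(n)\<close>, so \<open>f\<close> respects \<open>\<equiv>\<^sub>N\<close> and acts on the finite set \<open>\<int>/N\<close>; hence every
orbit \<open>f\<^sup>k(x)\<close> is eventually periodic modulo \<open>N\<close>, and applying \<open>f\<^sup>K\<close>, which maps \<open>\<equiv>\<^sub>N\<close> into
\<open>\<equiv>\<^sub>n\<close>, also modulo \<open>n\<close>. If the exponents \<open>n\<^sub>i \<rightarrow> \<infinity>\<close> converge profinitely to \<open>s\<close>, they are
eventually large and congruent to \<open>s\<close> modulo the period, so \<open>f\<^bsup>n\<^sub>i\<^esub>(x)\<close> is eventually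
constant modulo \<open>n\<close>, with a value depending only on \<open>s\<close>. Completeness of the profinite
integers then provides the limit.\<close>

lemma zcong_refl [simp]: "zcong n a a"
  by (simp add: zcong_def)

lemma zcong_sym: "zcong n a b \<Longrightarrow> zcong n b a"
  by (simp add: zcong_def)

lemma zcong_trans: "zcong n a b \<Longrightarrow> zcong n b c \<Longrightarrow> zcong n a c"
  by (simp add: zcong_def)

lemma Rep_zhat_range: "0 < n \<Longrightarrow> 0 \<le> Rep_zhat u n \<and> Rep_zhat u n < int n"
  using Rep_zhat[of u] by auto

lemma Rep_zhat_mod: "0 < m \<Longrightarrow> n dvd m \<Longrightarrow> Rep_zhat u m mod int n = Rep_zhat u n"
  using Rep_zhat[of u] by auto

lemma zcong_dvd: "0 < m \<Longrightarrow> n dvd m \<Longrightarrow> zcong m a b \<Longrightarrow> zcong n a b"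
  by (metis Rep_zhat_mod zcong_def)

lemma Rep_zhat_of_nat: "0 < n \<Longrightarrow> Rep_zhat (zhat_of_nat k) n = int k mod int n"
  unfolding zhat_of_nat_def by (subst Abs_zhat_inverse) (auto simp: mod_mod_cancel)

lemma tendsto_zhat_iff:
  "(a \<longlongrightarrow> L) F \<longleftrightarrow> (\<forall>m>0. eventually (\<lambda>i. zcong m (a i) L) F)"
proof
  assume lim: "(a \<longlongrightarrow> L) F"
  show "\<forall>m>0. eventually (\<lambda>i. zcong m (a i) L) F"
  proof (intro allI impI)
    fix m :: nat assume "0 < m"
    then have "open {y. zcong m y L}"
      unfolding open_zhat_def using zcong_trans zcong_sym by blast
    from topological_tendstoD[OF lim this]
    show "eventually (\<lambda>i. zcong m (a i) L) F" by simp
  qed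
next
  assume cong: "\<forall>m>0. eventually (\<lambda>i. zcong m (a i) L) F"
  show "(a \<longlongrightarrow> L) F"
  proof (rule topological_tendstoI)
    fix S assume "open S" "L \<in> S"
    then obtain m where "0 < m" "\<And>y. zcong m L y \<Longrightarrow> y \<in> S"
      unfolding open_zhat_def by blast
    with cong show "eventually (\<lambda>i. a i \<in> S) F"
      by (metis (mono_tags, lifting) eventually_mono zcong_sym)
  qed
qed

lemma zhat_Cauchy_convergent:
  fixes a :: "nat \<Rightarrow> zhat"
  assumes Cauchy: "\<And>n. 0 < n \<Longrightarrow> \<exists>I. \<forall>i\<ge>I. \<forall>j\<ge>I. zcong n (a i) (a j)"
  shows "\<exists>L. a \<longlonglongrightarrow> L"
proof -
  define I where "I n = (SOME I. \<forall>i\<ge>I. \<forall>j\<ge>I. zcong n (a i) (a j))" for n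
  have I: "\<And>i j. I n \<le> i \<Longrightarrow> I n \<le> j \<Longrightarrow> zcong n (a i) (a j)" if "0 < n" for n
    unfolding I_def using someI_ex[OF Cauchy[OF that]] by blast
  define L where "L n = (if n = 0 then 0 else Rep_zhat (a (I n)) n)" for n
  have compatible: "L m mod int n = L n" if "0 < m" "n dvd m" for m n
  proof -
    have "0 < n" using that by (auto intro: gr0I)
    have "zcong n (a (I m)) (a (max (I m) (I n)))"
      using zcong_dvd[OF that I[OF \<open>0 < m\<close>]] by simp
    moreover have "zcong n (a (I n)) (a (max (I m) (I n)))"
      using I[OF \<open>0 < n\<close>] by simp
    ultimately have "zcong n (a (I m)) (a (I n))"
      using zcong_sym zcong_trans by blast
    then show ?thesis
      using that \<open>0 < n\<close> Rep_zhat_mod[OF that] by (simp add: L_def zcong_def)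
  qed
  have Rep_L: "Rep_zhat (Abs_zhat L) n = Rep_zhat (a (I n)) n" if "0 < n" for n
    using that compatible Rep_zhat_range by (subst Abs_zhat_inverse) (auto simp: L_def)
  have "a \<longlonglongrightarrow> Abs_zhat L"
    unfolding tendsto_zhat_iff eventually_sequentially
    using I Rep_L by (metis order_refl zcong_def)
  then show ?thesis ..
qed

lemma eventually_mod_eq_of_tendsto_zhat_of_nat:
  assumes "(\<lambda>i. zhat_of_nat (ns i)) \<longlonglongrightarrow> s" "0 < Q"
  shows "eventually (\<lambda>i. ns i mod Q = nat (Rep_zhat s Q)) sequentially"
proof -
  have "eventually (\<lambda>i. zcong Q (zhat_of_nat (ns i)) s) sequentially"
    using assms unfolding tendsto_zhat_iff by blast
  then show ?thesis
    by eventually_elim (simp add: zcong_def Rep_zhat_of_nat[OF \<open>0 < Q\<close>] zmod_int[symmetric])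
qed

lemma eventually_periodic_zcong:
  fixes a :: "nat \<Rightarrow> zhat"
  assumes periodic: "\<And>k. k0 \<le> k \<Longrightarrow> zcong n (a (k + Q)) (a k)"
    and "k0 \<le> k" "k0 \<le> k'" "k mod Q = k' mod Q"
  shows "zcong n (a k) (a k')"
proof -
  have shift: "zcong n (a (k + t * Q)) (a k)" if "k0 \<le> k" for k t
    using that
  proof (induction t)
    case (Suc t)
    have "k0 \<le> k + t * Q" using Suc.prems by simp
    then have "zcong n (a (k + t * Q + Q)) (a k)"
      using periodic Suc zcong_trans by blast
    moreover have "k + t * Q + Q = k + Suc t * Q" by simp
    ultimately show ?case by (simp only:)
  qed simp
  show ?thesis
  proof (cases "k \<le> k'")
    case True
    then obtain t where "k' = k + t * Q"
      using \<open>k mod Q = k' mod Q\<close> by (metis le_add_diff_inverse mod_eq_dvd_iff_nat dvdE mult.commute)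
    then show ?thesis using shift[OF \<open>k0 \<le> k\<close>] zcong_sym by simp
  next
    case False
    then obtain t where "k = k' + t * Q"
      using \<open>k mod Q = k' mod Q\<close>
      by (metis le_add_diff_inverse mod_eq_dvd_iff_nat dvdE mult.commute nle_le)
    then show ?thesis using shift[OF \<open>k0 \<le> k'\<close>] by simp
  qed
qed

lemma profinite_limit_of_eventually_periodic:
  fixes a :: "nat \<Rightarrow> zhat"
  assumes periodic: "\<And>n. 0 < n \<Longrightarrow> \<exists>k0 Q. 0 < Q \<and> (\<forall>k\<ge>k0. zcong n (a (k + Q)) (a k))"
  shows "\<exists>L. \<forall>ns. filterlim (\<lambda>i. real (ns i)) at_top sequentially \<longrightarrow>
           (\<lambda>i. zhat_of_nat (ns i)) \<longlonglongrightarrow> s \<longrightarrow> (\<lambda>i. a (ns i)) \<longlonglongrightarrow> L"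
proof -
  define admissible where "admissible ns \<longleftrightarrow> filterlim (\<lambda>i. real (ns i)) at_top sequentially \<and>
      (\<lambda>i. zhat_of_nat (ns i)) \<longlonglongrightarrow> s" for ns :: "nat \<Rightarrow> nat"
  have eventually_cong: "\<exists>I. \<forall>i\<ge>I. \<forall>j\<ge>I. zcong n (a (ns i)) (a (ms j))"
    if "admissible ns" "admissible ms" "0 < n" for ns ms n
  proof -
    obtain k0 Q where "0 < Q" and Q: "\<And>k. k0 \<le> k \<Longrightarrow> zcong n (a (k + Q)) (a k)"
      using periodic[OF \<open>0 < n\<close>] by blast
    have eventually_in_class: "\<exists>I. \<forall>i\<ge>I. k0 \<le> ns i \<and> ns i mod Q = nat (Rep_zhat s Q)"
      if "admissible ns" for ns
    proof -
      have "eventually (\<lambda>i. real k0 \<le> real (ns i)) sequentially"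
        using that unfolding admissible_def filterlim_at_top by blast
      moreover have "eventually (\<lambda>i. ns i mod Q = nat (Rep_zhat s Q)) sequentially"
        using that \<open>0 < Q\<close> eventually_mod_eq_of_tendsto_zhat_of_nat
        unfolding admissible_def by blast
      ultimately have "eventually (\<lambda>i. k0 \<le> ns i \<and> ns i mod Q = nat (Rep_zhat s Q)) sequentially"
        by eventually_elim simp
      then show ?thesis unfolding eventually_sequentially .
    qed
    obtain I1 where I1: "\<And>i. I1 \<le> i \<Longrightarrow> k0 \<le> ns i \<and> ns i mod Q = nat (Rep_zhat s Q)"
      using eventually_in_class[OF \<open>admissible ns\<close>] by blast
    obtain I2 where I2: "\<And>j. I2 \<le> j \<Longrightarrow> k0 \<le> ms j \<and> ms j mod Q = nat (Rep_zhat s Q)"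
      using eventually_in_class[OF \<open>admissible ms\<close>] by blast
    have "zcong n (a (ns i)) (a (ms j))" if "max I1 I2 \<le> i" "max I1 I2 \<le> j" for i j
      using eventually_periodic_zcong[of k0 n a Q, OF Q] I1[of i] I2[of j] that by simp
    then show ?thesis by blast
  qed
  show ?thesis
  proof (cases "\<exists>ns0. admissible ns0")
    case False
    then show ?thesis unfolding admissible_def by blast
  next
    case True
    then obtain ns0 where "admissible ns0" ..
    then obtain L where L: "(\<lambda>i. a (ns0 i)) \<longlonglongrightarrow> L"
      using zhat_Cauchy_convergent[of "\<lambda>i. a (ns0 i)"] eventually_cong by blast
    have "(\<lambda>i. a (ns i)) \<longlonglongrightarrow> L" if ns: "admissible ns" for ns
      unfolding tendsto_zhat_iff
    proof (intro allI impI)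
      fix m :: nat assume "0 < m"
      obtain J where J: "\<And>i j. J \<le> i \<Longrightarrow> J \<le> j \<Longrightarrow> zcong m (a (ns i)) (a (ns0 j))"
        using eventually_cong[OF ns \<open>admissible ns0\<close> \<open>0 < m\<close>] by blast
      obtain J' where J': "\<And>j. J' \<le> j \<Longrightarrow> zcong m (a (ns0 j)) L"
        using L \<open>0 < m\<close> unfolding tendsto_zhat_iff eventually_sequentially by blast
      have "zcong m (a (ns i)) L" if "J \<le> i" for i
        using zcong_trans[OF J[OF that max.cobounded1] J'[OF max.cobounded2]] .
      then show "eventually (\<lambda>i. zcong m (a (ns i)) L) sequentially"
        unfolding eventually_sequentially by blast
    qed
    then show ?thesis unfolding admissible_def by blast
  qed
qed

lemma period_map_funpow_pos:
  "is_period_map f P \<Longrightarrow> 0 < n \<Longrightarrow> 0 < (P ^^ k) n"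
  by (induction k) (auto simp: is_period_map_def)

lemma period_map_funpow:
  assumes "is_period_map f P" "0 < n" "zcong ((P ^^ k) n) s t"
  shows "zcong n ((f ^^ k) s) ((f ^^ k) t)"
  using assms(2,3)
proof (induction k arbitrary: n)
  case (Suc k)
  have "zcong (P n) ((f ^^ k) s) ((f ^^ k) t)"
    using Suc assms(1) by (simp add: funpow_Suc_right is_period_map_def del: funpow.simps)
  then show ?case using Suc.prems(1) assms(1) by (simp add: is_period_map_def)
qed simp

lemma orbit_eventually_periodic_mod:
  assumes "0 < N" and respects: "\<And>s t. zcong N s t \<Longrightarrow> zcong N (f s) (f t)"
  shows "\<exists>k0 Q. 0 < Q \<and> (\<forall>k\<ge>k0. zcong N ((f ^^ (k + Q)) x) ((f ^^ k) x))"
proof -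
  have respects_funpow: "zcong N ((f ^^ j) s) ((f ^^ j) t)" if "zcong N s t" for j s t
    using that by (induction j) (auto intro: respects)
  define residue where "residue k = Rep_zhat ((f ^^ k) x) N" for k
  have "range residue \<subseteq> {0..<int N}"
    using Rep_zhat_range[OF \<open>0 < N\<close>] by (simp add: residue_def image_subset_iff)
  then have "finite (range residue)"
    by (rule finite_subset) simp
  then have "\<not> inj residue"
    using finite_imageD infinite_UNIV_nat by blast
  then obtain a b where "a < b" "residue a = residue b"
    unfolding inj_def by (metis linorder_neqE_nat)
  then have repeat: "zcong N ((f ^^ b) x) ((f ^^ a) x)"
    unfolding residue_def zcong_def by simp
  have "zcong N ((f ^^ (k + (b - a))) x) ((f ^^ k) x)" if "a \<le> k" for k
  proof -
    have "k + (b - a) = (k - a) + b" "k = (k - a) + a"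
      using that \<open>a < b\<close> by simp_all
    then have "(f ^^ (k + (b - a))) x = (f ^^ (k - a)) ((f ^^ b) x)"
      "(f ^^ k) x = (f ^^ (k - a)) ((f ^^ a) x)"
      by (metis funpow_add comp_apply)+
    then show ?thesis using respects_funpow[OF repeat] by simp
  qed
  then show ?thesis using \<open>a < b\<close> by (intro exI[of _ a] exI[of _ "b - a"]) simp
qed

lemma congruence_stable_orbit_eventually_periodic:
  assumes "congruence_stable f" "0 < n"
  shows "\<exists>k0 Q. 0 < Q \<and> (\<forall>k\<ge>k0. zcong n ((f ^^ (k + Q)) x) ((f ^^ k) x))"
proof -
  obtain P K where P: "is_period_map f P" and K: "\<forall>k\<ge>K. (P ^^ k) n = (P ^^ Suc k) n"
    using assms unfolding congruence_stable_def by blast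
  define N where "N = (P ^^ K) n"
  have "0 < N" unfolding N_def using period_map_funpow_pos[OF P \<open>0 < n\<close>] .
  have "P N = N" using K unfolding N_def by simp
  then have "zcong N (f s) (f t)" if "zcong N s t" for s t
    using P \<open>0 < N\<close> that by (simp add: is_period_map_def)
  then obtain k0 Q where Q: "0 < Q" "\<forall>k\<ge>k0. zcong N ((f ^^ (k + Q)) x) ((f ^^ k) x)"
    using orbit_eventually_periodic_mod[OF \<open>0 < N\<close>] by blast
  have "zcong n ((f ^^ (k + Q)) x) ((f ^^ k) x)" if "k0 + K \<le> k" for k
  proof -
    have "zcong n ((f ^^ K) ((f ^^ (k - K + Q)) x)) ((f ^^ K) ((f ^^ (k - K)) x))"
      using period_map_funpow[OF P \<open>0 < n\<close>, of K] Q(2)[rule_format, of "k - K"] that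
      unfolding N_def by simp
    then show ?thesis
      using that by (simp add: funpow_add[symmetric, THEN fun_cong, simplified])
  qed
  then show ?thesis using Q(1) by blast
qed

theorem theorem3p7:
  fixes f :: "zhat \<Rightarrow> zhat"
  assumes "continuous_on UNIV f"
    and "congruence_stable f"
  shows "profinite_preperiodic f"
  unfolding profinite_preperiodic_def
proof (intro allI)
  fix x s
  have "\<exists>k0 Q. 0 < Q \<and> (\<forall>k\<ge>k0. zcong n ((\<lambda>k. (f ^^ k) x) (k + Q)) ((\<lambda>k. (f ^^ k) x) k))"
    if "0 < n" for n
    using congruence_stable_orbit_eventually_periodic[OF assms(2) that] by simp
  from profinite_limit_of_eventually_periodic[OF this, of s]
  show "\<exists>L. \<forall>ns. (\<forall>i. 0 < ns i) \<longrightarrow> filterlim (\<lambda>i. real (ns i)) at_top sequentially \<longrightarrow>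
      (\<lambda>i. zhat_of_nat (ns i)) \<longlonglongrightarrow> s \<longrightarrow> (\<lambda>i. (f ^^ ns i) x) \<longlonglongrightarrow> L"
    by fast
qed

end
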